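(* Let $(C_*,\partial,\ell)$ be an ascending chain complex over a field $\kappa$ such that for every $k$ the filtered vector space $(C_k,\ell|_{C_k})$ satisfies the best approximation property. Then there are subcomplexes $A_*$ and $\mathcal{H}_*$ of $C_*$ such that: (1) for each $k$, $C_k=A_k\oplus\mathcal{H}_k$ and $\ell(a+h)=\max\{\ell(a),\ell(h)\}$ for all $a\in A_k$, $h\in\mathcal{H}_k$; (2) $\partial|_{\mathcal{H}_*}=0$, and for each $k$ the restriction to $\mathcal{H}_k$ of the projection $\ker\partial|_{C_k}\to H_k(C_* )$ is an isomorphism of filtered vector spaces $(\mathcal{H}_k,\ell|_{\mathcal{H}_k})\to(H_k(C_* ),\rho|_{H_k(C_* )})$, where $\rho$ is the spectral invariant function; (3) $H_k(A_* )=0$ for all $k$.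
   Context: An ascending chain complex over $\kappa$ is a triple $(C_*,\partial,\ell)$ where $(C_*=\bigoplus_{k\in\mathbb{Z}}C_k,\partial)$ is a chain complex of $\kappa$-vector spaces and $\ell\colon C_*\to\mathbb{R}\cup\{-\infty\}$ satisfies: $\ell(x)=-\infty$ iff $x=0$; $\ell(\sum_i c_ix_i)\le\max\{\ell(x_i): c_i\neq 0\}$, with equality if the $x_i$ lie in pairwise distinct degrees; and $\ell(\partial x)\le\ell(x)$. A filtered vector space $(V,\ell)$ (with $\ell(v)=-\infty$ iff $v=0$, $\ell(cv)=\ell(v)$ for $c\ne0$, $\ell(v+w)\le\max\{\ell(v),\ell(w)\}$) satisfies the best approximation property if for every proper subspace $W\subsetneq V$ and every $v\in V\setminus W$ there is $w_0\in W$ with $\ell(v-w_0)\le\ell(v-w)$ for all $w\in W$. The spectral invariant function $\rho\colon H_*(C_* )\to\mathbb{R}\cup\{-\infty\}$ is $\rho(h)=\inf\{\ell(c): c\in\ker\partial,\ [c]=h\}$. *)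

theory Defs
  imports Complex_Main "HOL-Library.Extended_Real"
begin

text \<open>The graded space C_* is modelled inside an ambient vector space of type 'v
  (over a field 'k, scalar multiplication scale) as an internal direct sum of
  subspaces C k, k an integer.\<close>

definition graded_direct_sum :: "('k::field \<Rightarrow> 'v::ab_group_add \<Rightarrow> 'v) \<Rightarrow> (int \<Rightarrow> 'v set) \<Rightarrow> bool" where
  "graded_direct_sum scale C \<longleftrightarrow>
     (\<forall>k. module.subspace scale (C k)) \<and>
     (\<forall>v. \<exists>f. finite {k. f k \<noteq> 0} \<and> (\<forall>k. f k \<in> C k) \<and> v = (\<Sum>k\<in>{k. f k \<noteq> 0}. f k)) \<and>
     (\<forall>f. finite {k. f k \<noteq> 0} \<and> (\<forall>k. f k \<in> C k) \<and> (\<Sum>k\<in>{k. f k \<noteq> 0}. f k) = 0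
          \<longrightarrow> (\<forall>k. f k = 0))"

definition chain_complex :: "('k::field \<Rightarrow> 'v::ab_group_add \<Rightarrow> 'v) \<Rightarrow> (int \<Rightarrow> 'v set) \<Rightarrow> ('v \<Rightarrow> 'v) \<Rightarrow> bool" where
  "chain_complex scale C d \<longleftrightarrow>
     graded_direct_sum scale C \<and> Vector_Spaces.linear scale scale d \<and>
     (\<forall>k. d ` C k \<subseteq> C (k - 1)) \<and> (\<forall>x. d (d x) = 0)"

definition ascending_chain_complex ::
  "('k::field \<Rightarrow> 'v::ab_group_add \<Rightarrow> 'v) \<Rightarrow> (int \<Rightarrow> 'v set) \<Rightarrow> ('v \<Rightarrow> 'v) \<Rightarrow> ('v \<Rightarrow> ereal) \<Rightarrow> bool" where
  "ascending_chain_complex scale C d L \<longleftrightarrow>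
     chain_complex scale C d \<and>
     (\<forall>x. L x \<noteq> \<infinity>) \<and>
     (\<forall>x. L x = -\<infinity> \<longleftrightarrow> x = 0) \<and>
     (\<forall>(I::nat set) (c::nat \<Rightarrow> 'k) (x::nat \<Rightarrow> 'v). finite I \<longrightarrow>
        L (\<Sum>i\<in>I. scale (c i) (x i)) \<le> (SUP i\<in>{i\<in>I. c i \<noteq> 0}. L (x i))) \<and>
     (\<forall>(I::nat set) (c::nat \<Rightarrow> 'k) (x::nat \<Rightarrow> 'v) (deg::nat \<Rightarrow> int).
        finite I \<and> inj_on deg I \<and> (\<forall>i\<in>I. x i \<in> C (deg i)) \<longrightarrow>
        L (\<Sum>i\<in>I. scale (c i) (x i)) = (SUP i\<in>{i\<in>I. c i \<noteq> 0}. L (x i))) \<and>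
     (\<forall>x. L (d x) \<le> L x)"

definition best_approx :: "('k::field \<Rightarrow> 'v::ab_group_add \<Rightarrow> 'v) \<Rightarrow> 'v set \<Rightarrow> ('v \<Rightarrow> ereal) \<Rightarrow> bool" where
  "best_approx scale V L \<longleftrightarrow>
     (\<forall>W. module.subspace scale W \<and> W \<subset> V \<longrightarrow>
        (\<forall>v\<in>V - W. \<exists>w0\<in>W. \<forall>w\<in>W. L (v - w0) \<le> L (v - w)))"

definition subcomplex :: "('k::field \<Rightarrow> 'v::ab_group_add \<Rightarrow> 'v) \<Rightarrow> (int \<Rightarrow> 'v set) \<Rightarrow> ('v \<Rightarrow> 'v) \<Rightarrow> (int \<Rightarrow> 'v set) \<Rightarrow> bool" where
  "subcomplex scale C d A \<longleftrightarrow>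
     (\<forall>k. module.subspace scale (A k) \<and> A k \<subseteq> C k \<and> d ` A k \<subseteq> A (k - 1))"

definition hom_class :: "('v::ab_group_add \<Rightarrow> 'v) \<Rightarrow> 'v \<Rightarrow> 'v set" where
  "hom_class d c = {c + b | b. b \<in> range d}"

definition homology_deg :: "(int \<Rightarrow> 'v::ab_group_add set) \<Rightarrow> ('v \<Rightarrow> 'v) \<Rightarrow> int \<Rightarrow> 'v set set" where
  "homology_deg C d k = hom_class d ` {c \<in> C k. d c = 0}"

definition spectral_invariant :: "('v::ab_group_add \<Rightarrow> 'v) \<Rightarrow> ('v \<Rightarrow> ereal) \<Rightarrow> 'v set \<Rightarrow> ereal" where
  "spectral_invariant d L h = Inf (L ` {c. d c = 0 \<and> hom_class d c = h})"

end

theory Submission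
  imports Defs
begin

text \<open>Call subspaces U and W orthogonal if L (u + w) = max (L u) (L w) for all u in U
  and w in W. By Zorn's lemma some U containing a given U0 is maximal among the subspaces
  orthogonal to W, and the best approximation property forces U + W to be the whole space:
  otherwise v - w0, for w0 a best approximation in U + W of a vector v outside it, is
  orthogonal to U + W and could be added to U. In each degree this yields H_k orthogonal
  to the boundaries B_k with H_k + B_k the cycles, and then A_k containing B_k, orthogonal
  to H_k, with A_k + H_k = C_k. An element h of H_k minimises L in its homology class:
  a representative h + d y may be replaced by h + d y' with y' the degree k + 1 part of y,
  since L of a sum of elements of distinct degrees is their maximum, and d y' lies in A_k,
  which is orthogonal to h.\<close>

definition orthogonal_wrt :: "('v::ab_group_add \<Rightarrow> ereal) \<Rightarrow> 'v set \<Rightarrow> 'v set \<Rightarrow> bool" where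
  "orthogonal_wrt L U W \<longleftrightarrow> (\<forall>u\<in>U. \<forall>w\<in>W. L (u + w) = max (L u) (L w))"

lemma orthogonal_wrt_commute: "orthogonal_wrt L U W \<longleftrightarrow> orthogonal_wrt L W U"
  unfolding orthogonal_wrt_def by (metis add.commute max.commute)

lemma best_approx_subset:
  assumes "best_approx scale V L" "U \<subseteq> V"
  shows "best_approx scale U L"
  using assms unfolding best_approx_def by blast

context vector_space
begin

lemma subset_sums_left: "subspace W \<Longrightarrow> U \<subseteq> {u + w | u w. u \<in> U \<and> w \<in> W}"
  using subspace_0 by force

lemma subspace_Union_chain:
  assumes "\<C> \<noteq> {}" "\<And>U. U \<in> \<C> \<Longrightarrow> subspace U"
    and "\<And>U U'. U \<in> \<C> \<Longrightarrow> U' \<in> \<C> \<Longrightarrow> U \<subseteq> U' \<or> U' \<subseteq> U"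
  shows "subspace (\<Union>\<C>)"
proof (rule subspaceI)
  show "0 \<in> \<Union>\<C>"
    using assms(1,2) subspace_0 by blast
  show "x + y \<in> \<Union>\<C>" if xy: "x \<in> \<Union>\<C>" "y \<in> \<Union>\<C>" for x y
  proof -
    obtain U U' where "U \<in> \<C>" "U' \<in> \<C>" "x \<in> U" "y \<in> U'"
      using xy by blast
    with assms(2) assms(3)[of U U'] show ?thesis
      by (auto intro: subspace_add)
  qed
  show "c *s x \<in> \<Union>\<C>" if "x \<in> \<Union>\<C>" for c x
    using that assms(2) subspace_scale by blast
qed

end

locale filtered_vector_space = vector_space scale
  for scale :: "'k::field \<Rightarrow> 'v::ab_group_add \<Rightarrow> 'v" (infixr \<open>*s\<close> 75) +
  fixes L :: "'v \<Rightarrow> ereal"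
  assumes L_eq_bot_iff: "L x = -\<infinity> \<longleftrightarrow> x = 0"
    and L_add_le: "L (x + y) \<le> max (L x) (L y)"
    and L_scale: "c \<noteq> 0 \<Longrightarrow> L (c *s x) = L x"
begin

lemma L_zero [simp]: "L 0 = -\<infinity>"
  by (simp add: L_eq_bot_iff)

lemma L_uminus: "L (- x) = L x"
  using L_scale[of "-1" x] by simp

lemma orthogonal_wrt_Int_zero:
  assumes "subspace U" "subspace W" "orthogonal_wrt L U W"
  shows "U \<inter> W = {0}"
proof -
  have "x = 0" if "x \<in> U" "x \<in> W" for x
  proof -
    have "L (x + - x) = max (L x) (L (- x))"
      using assms(3) \<open>x \<in> U\<close> subspace_neg[OF assms(2) \<open>x \<in> W\<close>]
      unfolding orthogonal_wrt_def by blast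
    then show "x = 0"
      by (metis L_eq_bot_iff L_uminus add.right_inverse max.idem)
  qed
  then show ?thesis
    using assms(1,2) subspace_0 by blast
qed

lemma L_scale_add_eq_max:
  assumes S: "subspace S" and minimal: "\<forall>s\<in>S. L v \<le> L (v + s)"
    and "s \<in> S" "c \<noteq> 0"
  shows "L (c *s v + s) = max (L v) (L s)"
proof -
  have "c *s v + s = c *s (v + inverse c *s s)"
    using \<open>c \<noteq> 0\<close> by (simp add: scale_right_distrib)
  then have lower: "L v \<le> L (c *s v + s)"
    using minimal \<open>s \<in> S\<close> \<open>c \<noteq> 0\<close> S by (simp add: L_scale subspace_scale)
  have "L s \<le> max (L (c *s v + s)) (L (- (c *s v)))"
    using L_add_le[of "c *s v + s" "- (c *s v)"] by simp
  then have "L s \<le> L (c *s v + s)"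
    using lower \<open>c \<noteq> 0\<close> by (auto simp: L_uminus L_scale max_def split: if_splits)
  moreover have "L (c *s v + s) \<le> max (L v) (L s)"
    using L_add_le[of "c *s v" s] \<open>c \<noteq> 0\<close> by (simp add: L_scale)
  ultimately show ?thesis
    using lower by (simp add: antisym)
qed

lemma orthogonal_wrt_span_insert:
  assumes M: "subspace M" and W: "subspace W" and MW: "orthogonal_wrt L M W"
    and minimal: "\<forall>s\<in>{m + w | m w. m \<in> M \<and> w \<in> W}. L v \<le> L (v + s)"
  shows "orthogonal_wrt L (span (insert v M)) W"
  unfolding orthogonal_wrt_def
proof (intro ballI)
  fix y w assume "y \<in> span (insert v M)" "w \<in> W"
  then obtain c where "y - c *s v \<in> M"
    using span_eq_iff[THEN iffD2, OF M] by (auto simp: span_insert)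
  then obtain m where y: "y = m + c *s v" and "m \<in> M"
    by (metis diff_add_cancel)
  show "L (y + w) = max (L y) (L w)"
  proof (cases "c = 0")
    case True
    then show ?thesis
      using MW \<open>m \<in> M\<close> \<open>w \<in> W\<close> y by (simp add: orthogonal_wrt_def)
  next
    case False
    let ?S = "{m + w | m w. m \<in> M \<and> w \<in> W}"
    have S: "subspace ?S"
      using M W by (rule subspace_sums)
    have "m + w \<in> ?S" "m \<in> ?S"
      using \<open>m \<in> M\<close> \<open>w \<in> W\<close> W subspace_0 by (blast, force)
    have Ly: "L y = max (L v) (L m)"
      using L_scale_add_eq_max[OF S minimal \<open>m \<in> ?S\<close> False] by (simp add: y add.commute)
    have "L (y + w) = L (c *s v + (m + w))"
      by (simp add: y algebra_simps)
    also have "\<dots> = max (L v) (L (m + w))"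
      using L_scale_add_eq_max[OF S minimal \<open>m + w \<in> ?S\<close> False] .
    also have "L (m + w) = max (L m) (L w)"
      using MW \<open>m \<in> M\<close> \<open>w \<in> W\<close> by (simp add: orthogonal_wrt_def)
    finally show ?thesis
      using Ly by (simp add: max.assoc)
  qed
qed

lemma best_approx_minimal_vector:
  assumes "best_approx scale V L" "subspace V" "subspace S" "S \<subset> V"
  obtains v where "v \<in> V - S" "\<forall>s\<in>S. L v \<le> L (v + s)"
proof -
  obtain x where x: "x \<in> V" "x \<notin> S"
    using assms(4) by blast
  with assms obtain s0 where "s0 \<in> S" and best: "\<forall>s\<in>S. L (x - s0) \<le> L (x - s)"
    unfolding best_approx_def by blast
  show thesis
  proof (rule that)
    have "x - s0 \<in> V"
      using x(1) \<open>s0 \<in> S\<close> assms(2,4) by (blast intro: subspace_diff)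
    moreover have "x - s0 \<notin> S"
      using x(2) \<open>s0 \<in> S\<close> subspace_add[OF assms(3)] by fastforce
    ultimately show "x - s0 \<in> V - S" by blast
    show "\<forall>s\<in>S. L (x - s0) \<le> L (x - s0 + s)"
    proof
      fix s assume "s \<in> S"
      then have "L (x - s0) \<le> L (x - (s0 - s))"
        using best \<open>s0 \<in> S\<close> subspace_diff[OF assms(3)] by blast
      then show "L (x - s0) \<le> L (x - s0 + s)"
        by (simp add: algebra_simps)
    qed
  qed
qed

lemma best_approx_orthogonal_complement:
  assumes V: "subspace V" "best_approx scale V L"
    and W: "subspace W" "W \<subseteq> V"
    and U0: "subspace U0" "U0 \<subseteq> V" "orthogonal_wrt L U0 W"
  obtains U where "subspace U" "U0 \<subseteq> U" "orthogonal_wrt L U W"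
    "{u + w | u w. u \<in> U \<and> w \<in> W} = V"
proof -
  define \<F> where "\<F> = {U. subspace U \<and> U0 \<subseteq> U \<and> U \<subseteq> V \<and> orthogonal_wrt L U W}"
  have "\<exists>M\<in>\<F>. \<forall>X\<in>\<F>. M \<subseteq> X \<longrightarrow> X = M"
  proof (rule subset_Zorn_nonempty)
    show "\<F> \<noteq> {}"
      using U0 unfolding \<F>_def by blast
    fix \<C> assume "\<C> \<noteq> {}" and chain: "subset.chain \<F> \<C>"
    then have "subspace (\<Union>\<C>)"
      by (intro subspace_Union_chain) (auto simp: \<F>_def subset_chain_def)
    moreover have "U0 \<subseteq> \<Union>\<C>" "\<Union>\<C> \<subseteq> V"
      using \<open>\<C> \<noteq> {}\<close> chain unfolding \<F>_def subset_chain_def by blast+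
    moreover have "orthogonal_wrt L (\<Union>\<C>) W"
      using chain unfolding \<F>_def subset_chain_def orthogonal_wrt_def by blast
    ultimately show "\<Union>\<C> \<in> \<F>"
      unfolding \<F>_def by blast
  qed
  then obtain M where "M \<in> \<F>" and M_maximal: "\<And>X. X \<in> \<F> \<Longrightarrow> M \<subseteq> X \<Longrightarrow> X = M"
    by blast
  then have M: "subspace M" "U0 \<subseteq> M" "M \<subseteq> V" "orthogonal_wrt L M W"
    by (auto simp: \<F>_def)
  let ?S = "{m + w | m w. m \<in> M \<and> w \<in> W}"
  have S: "subspace ?S"
    using M(1) W(1) by (rule subspace_sums)
  have "?S \<subseteq> V"
    using M(3) W(2) V(1) by (auto intro: subspace_add)
  moreover have "\<not> ?S \<subset> V"
  proof
    assume "?S \<subset> V"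
    then obtain v where v: "v \<in> V - ?S" and minimal: "\<forall>s\<in>?S. L v \<le> L (v + s)"
      using best_approx_minimal_vector[OF V(2,1) S] by blast
    let ?M' = "span (insert v M)"
    have M_psubset: "M \<subset> ?M'"
      using v W(1) subspace_0 span_superset[of "insert v M"] by force
    have "?M' \<subseteq> V"
      using v M(3) V(1) by (intro span_minimal) auto
    with M_psubset have "?M' \<in> \<F>"
      unfolding \<F>_def using M orthogonal_wrt_span_insert[OF M(1) W(1) M(4) minimal] by auto
    with M_psubset show False
      using M_maximal by blast
  qed
  ultimately have "?S = V"
    by blast
  with M show thesis
    using that by blast
qed

end

lemma mem_hom_class_iff: "c \<in> hom_class d h \<longleftrightarrow> (\<exists>y. c = h + d y)"
  unfolding hom_class_def by blast

locale filtered_chain_complex = vector_space scale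
  for scale :: "'k::field \<Rightarrow> 'v::ab_group_add \<Rightarrow> 'v" (infixr \<open>*s\<close> 75) +
  fixes C :: "int \<Rightarrow> 'v set" and d :: "'v \<Rightarrow> 'v" and L :: "'v \<Rightarrow> ereal"
  assumes ascending: "ascending_chain_complex scale C d L"
begin

lemma chain_complex: "chain_complex scale C d"
  using ascending by (simp add: ascending_chain_complex_def)

lemma subspace_C: "subspace (C k)"
  using chain_complex by (simp add: chain_complex_def graded_direct_sum_def)

lemma graded_decomposition:
  "\<exists>f. finite {k. f k \<noteq> 0} \<and> (\<forall>k. f k \<in> C k) \<and> v = (\<Sum>k\<in>{k. f k \<noteq> 0}. f k)"
  using chain_complex unfolding chain_complex_def graded_direct_sum_def by blast

lemma d_C: "x \<in> C k \<Longrightarrow> d x \<in> C (k - 1)"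
  using chain_complex unfolding chain_complex_def by blast

lemma d_d [simp]: "d (d x) = 0"
  using chain_complex by (simp add: chain_complex_def)

sublocale d: Vector_Spaces.linear scale scale d
  using chain_complex by (simp add: chain_complex_def)

lemma L_sum_le:
  "finite I \<Longrightarrow> L (\<Sum>i\<in>I. c i *s x i) \<le> (SUP i\<in>{i\<in>I. c i \<noteq> 0}. L (x i))"
  for I :: "nat set"
  using ascending unfolding ascending_chain_complex_def by blast

lemma L_sum_homogeneous:
  "finite I \<Longrightarrow> inj_on deg I \<Longrightarrow> (\<forall>i\<in>I. x i \<in> C (deg i)) \<Longrightarrow>
    L (\<Sum>i\<in>I. c i *s x i) = (SUP i\<in>{i\<in>I. c i \<noteq> 0}. L (x i))"
  for I :: "nat set"
  using ascending unfolding ascending_chain_complex_def by blast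

sublocale filtered_vector_space scale L
proof
  show "L x = -\<infinity> \<longleftrightarrow> x = 0" for x
    using ascending by (simp add: ascending_chain_complex_def)
  have pair: "{i \<in> {0::nat, 1}. (1::'k) \<noteq> 0} = {0, 1}"
    by auto
  show "L (x + y) \<le> max (L x) (L y)" for x y
    using L_sum_le[of "{0, 1}" "\<lambda>_. 1" "\<lambda>i. if i = 0 then x else y", unfolded pair]
    by (simp add: sup_max)
  have L_scale_le: "L (c *s x) \<le> L x" if "c \<noteq> 0" for c x
    using L_sum_le[of "{0}" "\<lambda>_. c" "\<lambda>_. x"] that by simp
  show "L (c *s x) = L x" if "c \<noteq> 0" for c x
    using L_scale_le[OF that, of x] L_scale_le[of "inverse c" "c *s x"] that
    by (simp add: antisym)
qed

lemma L_homogeneous_component_le: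
  fixes g :: "'i::countable \<Rightarrow> 'v"
  assumes "finite S" "inj_on deg S" "\<forall>j\<in>S. g j \<in> C (deg j)" "k \<in> S"
  shows "L (g k) \<le> L (\<Sum>j\<in>S. g j)"
proof -
  \<comment> \<open>the axiom of ascending_chain_complex is stated for nat-indexed families\<close>
  let ?I = "to_nat ` S"
  have "(\<Sum>i\<in>?I. 1 *s g (from_nat i)) = (\<Sum>j\<in>S. g j)"
    by (simp add: sum.reindex inj_on_def)
  moreover have "L (\<Sum>i\<in>?I. 1 *s g (from_nat i)) = (SUP i\<in>?I. L (g (from_nat i)))"
    using L_sum_homogeneous[of ?I "\<lambda>i. deg (from_nat i)" "\<lambda>i. g (from_nat i)" "\<lambda>_. 1"] assms(1-3)
    by (simp add: inj_on_def)
  moreover have "L (g k) \<le> (SUP i\<in>?I. L (g (from_nat i)))"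
    using assms(4) by (intro SUP_upper2[of "to_nat k"]) auto
  ultimately show ?thesis
    by simp
qed

lemma homogeneous_boundary_le:
  assumes "h \<in> C k"
  obtains y' where "y' \<in> C (k + 1)" "L (h + d y') \<le> L (h + d y)"
proof -
  obtain f where f: "finite {j. f j \<noteq> 0}" "\<forall>j. f j \<in> C j" "y = (\<Sum>j\<in>{j. f j \<noteq> 0}. f j)"
    using graded_decomposition by blast
  define S where "S = insert (k + 1) {j. f j \<noteq> 0}"
  have S: "finite S" "k + 1 \<in> S"
    using f(1) by (simp_all add: S_def)
  have "y = (\<Sum>j\<in>S. f j)"
    unfolding f(3) S_def by (rule sum.mono_neutral_left) (use f(1) in auto)
  define e where "e j = (if j = k + 1 then h + d (f j) else d (f j))" for j
  then have "h + d y = (h + d (f (k + 1))) + (\<Sum>j\<in>S - {k + 1}. e j)"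
    using S \<open>y = (\<Sum>j\<in>S. f j)\<close> by (simp add: d.add d.sum sum.remove add.assoc)
  also have "\<dots> = (\<Sum>j\<in>S. e j)"
    using S by (simp add: e_def sum.remove)
  finally have sum_eq: "h + d y = (\<Sum>j\<in>S. e j)" .
  have "d (f (k + 1)) \<in> C k"
    using d_C[of "f (k + 1)" "k + 1"] f(2) by simp
  then have "\<forall>j\<in>S. e j \<in> C (j - 1)"
    using assms f(2) d_C subspace_C by (auto simp: e_def intro: subspace_add)
  then have "L (e (k + 1)) \<le> L (h + d y)"
    unfolding sum_eq using L_homogeneous_component_le[OF S(1), of "\<lambda>j. j - 1"] S(2)
    by (simp add: inj_on_def)
  then have "L (h + d (f (k + 1))) \<le> L (h + d y)"
    by (simp add: e_def)
  with f(2) show thesis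
    using that by blast
qed

lemma hom_class_eq_iff: "hom_class d x = hom_class d y \<longleftrightarrow> (\<exists>z. x = y + d z)"
proof
  assume "hom_class d x = hom_class d y"
  moreover have "x \<in> hom_class d x"
    using mem_hom_class_iff[of x d x] by (metis add.right_neutral d.zero)
  ultimately show "\<exists>z. x = y + d z"
    by (simp add: mem_hom_class_iff)
next
  assume "\<exists>z. x = y + d z"
  then obtain z where x: "x = y + d z" by blast
  have "(\<exists>u. c = x + d u) \<longleftrightarrow> (\<exists>u. c = y + d u)" for c
  proof (intro iffI; elim exE)
    show "\<exists>u. c = y + d u" if "c = x + d u" for u
      using that by (intro exI[of _ "z + u"]) (simp add: x d.add add.assoc)
    show "\<exists>u. c = x + d u" if "c = y + d u" for u
      using that by (intro exI[of _ "u - z"]) (simp add: x d.diff)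
  qed
  then show "hom_class d x = hom_class d y"
    by (auto simp: mem_hom_class_iff)
qed

definition cycles :: "int \<Rightarrow> 'v set" where
  "cycles k = {c \<in> C k. d c = 0}"

definition boundaries :: "int \<Rightarrow> 'v set" where
  "boundaries k = d ` C (k + 1)"

lemma subspace_cycles: "subspace (cycles k)"
  unfolding cycles_def using subspace_C[of k]
  by (intro subspaceI) (auto simp: subspace_0 subspace_add subspace_scale d.add d.scale)

lemma subspace_boundaries: "subspace (boundaries k)"
  unfolding boundaries_def by (rule d.subspace_image[OF subspace_C])

lemma boundaries_subset_cycles: "boundaries k \<subseteq> cycles k"
  unfolding boundaries_def cycles_def using d_C[of _ "k + 1"] by auto

lemma cycles_subset_C: "cycles k \<subseteq> C k"
  unfolding cycles_def by blast

end

locale best_approx_chain_complex = filtered_chain_complex +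
  assumes best_approx_C: "best_approx scale (C k) L"

locale harmonic_splitting = filtered_chain_complex +
  fixes A H
  assumes subspace_A: "subspace (A k)"
    and subspace_H: "subspace (H k)"
    and boundaries_subset_A: "boundaries k \<subseteq> A k"
    and H_plus_boundaries: "{h + b | h b. h \<in> H k \<and> b \<in> boundaries k} = cycles k"
    and orthogonal_A_H: "orthogonal_wrt L (A k) (H k)"
    and A_plus_H: "{a + h | a h. a \<in> A k \<and> h \<in> H k} = C k"

context best_approx_chain_complex
begin

lemma harmonic_splitting_degree:
  "\<exists>H A. subspace H \<and> subspace A \<and> boundaries k \<subseteq> A \<and>
     {h + b | h b. h \<in> H \<and> b \<in> boundaries k} = cycles k \<and>
     orthogonal_wrt L A H \<and> {a + h | a h. a \<in> A \<and> h \<in> H} = C k"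
proof -
  have best_approx_cycles: "best_approx scale (cycles k) L"
    using best_approx_subset[OF best_approx_C cycles_subset_C] .
  have "{0} \<subseteq> cycles k"
    using subspace_0[OF subspace_cycles] by blast
  moreover have "orthogonal_wrt L {0} (boundaries k)"
    by (simp add: orthogonal_wrt_def)
  ultimately obtain H where H: "subspace H" "{0} \<subseteq> H" "orthogonal_wrt L H (boundaries k)"
      "{h + b | h b. h \<in> H \<and> b \<in> boundaries k} = cycles k"
    by (rule best_approx_orthogonal_complement[OF subspace_cycles best_approx_cycles
          subspace_boundaries boundaries_subset_cycles subspace_single_0])
  have "H \<subseteq> C k"
    using subset_sums_left[OF subspace_boundaries, of H] H(4) cycles_subset_C by blast
  moreover have "boundaries k \<subseteq> C k"
    using boundaries_subset_cycles cycles_subset_C by blast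
  moreover have "orthogonal_wrt L (boundaries k) H"
    using H(3) orthogonal_wrt_commute by blast
  ultimately obtain A where "subspace A" "boundaries k \<subseteq> A" "orthogonal_wrt L A H"
      "{a + h | a h. a \<in> A \<and> h \<in> H} = C k"
    by (rule best_approx_orthogonal_complement[OF subspace_C best_approx_C H(1) _
          subspace_boundaries])
  with H show ?thesis
    by blast
qed

lemma exists_harmonic_splitting: "\<exists>A H. harmonic_splitting scale C d L A H"
proof -
  define P where "P k H A \<longleftrightarrow> subspace H \<and> subspace A \<and> boundaries k \<subseteq> A \<and>
     {h + b | h b. h \<in> H \<and> b \<in> boundaries k} = cycles k \<and>
     orthogonal_wrt L A H \<and> {a + h | a h. a \<in> A \<and> h \<in> H} = C k" for k H A
  have "\<forall>k. \<exists>H A. P k H A"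
    unfolding P_def by (intro allI) (rule harmonic_splitting_degree)
  from choice[OF this] obtain H where "\<forall>k. \<exists>A. P k (H k) A"
    by blast
  from choice[OF this] obtain A where "\<forall>k. P k (H k) (A k)"
    by blast
  then have "harmonic_splitting scale C d L A H"
    unfolding P_def by unfold_locales blast+
  then show ?thesis
    by blast
qed

end

context harmonic_splitting
begin

lemma A_subset_C: "A k \<subseteq> C k"
  using subset_sums_left[OF subspace_H] A_plus_H by blast

lemma H_subset_cycles: "H k \<subseteq> cycles k"
  using subset_sums_left[OF subspace_boundaries] H_plus_boundaries by blast

lemma d_H: "h \<in> H k \<Longrightarrow> d h = 0"
  using H_subset_cycles by (auto simp: cycles_def)

lemma H_subset_C: "H k \<subseteq> C k"
  using H_subset_cycles cycles_subset_C by blast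

lemma A_Int_H: "A k \<inter> H k = {0}"
  using orthogonal_wrt_Int_zero[OF subspace_A subspace_H orthogonal_A_H] .

lemma d_A: "a \<in> A k \<Longrightarrow> d a \<in> A (k - 1)"
  using A_subset_C boundaries_subset_A[of "k - 1"] by (force simp: boundaries_def)

lemma subcomplex_A: "subcomplex scale C d A"
  unfolding subcomplex_def using subspace_A A_subset_C d_A by blast

lemma subcomplex_H: "subcomplex scale C d H"
  unfolding subcomplex_def
  using subspace_H H_subset_C d_H subspace_0 by auto

lemma L_H_le_add_boundary:
  assumes "h \<in> H k"
  shows "L h \<le> L (h + d y)"
proof -
  obtain y' where "y' \<in> C (k + 1)" and le: "L (h + d y') \<le> L (h + d y)"
    using homogeneous_boundary_le H_subset_C assms by blast
  then have "d y' \<in> A k"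
    using boundaries_subset_A by (auto simp: boundaries_def)
  then have "L (d y' + h) = max (L (d y')) (L h)"
    using orthogonal_A_H assms unfolding orthogonal_wrt_def by blast
  with le show ?thesis
    by (simp add: add.commute)
qed

lemma spectral_invariant_H:
  assumes "h \<in> H k"
  shows "spectral_invariant d L (hom_class d h) = L h"
  unfolding spectral_invariant_def
proof (rule antisym)
  show "Inf (L ` {c. d c = 0 \<and> hom_class d c = hom_class d h}) \<le> L h"
    using d_H[OF assms] by (intro Inf_lower) auto
  show "L h \<le> Inf (L ` {c. d c = 0 \<and> hom_class d c = hom_class d h})"
    using L_H_le_add_boundary[OF assms] by (auto simp: hom_class_eq_iff intro!: Inf_greatest)
qed

lemma bij_betw_hom_class_H: "bij_betw (hom_class d) (H k) (homology_deg C d k)"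
  unfolding bij_betw_def
proof
  show "inj_on (hom_class d) (H k)"
  proof (rule inj_onI)
    fix h h' assume h: "h \<in> H k" "h' \<in> H k" "hom_class d h = hom_class d h'"
    then obtain z where z: "h = h' + d z"
      by (auto simp: hom_class_eq_iff)
    have "h - h' \<in> H k"
      using subspace_diff[OF subspace_H] h(1,2) .
    then have "L (h - h') \<le> L ((h - h') + d (- z))"
      by (rule L_H_le_add_boundary)
    also have "(h - h') + d (- z) = 0"
      by (simp add: z d.neg)
    finally show "h = h'"
      by (simp add: L_eq_bot_iff)
  qed
  have "hom_class d ` cycles k \<subseteq> hom_class d ` H k"
  proof
    fix x assume "x \<in> hom_class d ` cycles k"
    then obtain h y where "h \<in> H k" "x = hom_class d (h + d y)"
      using H_plus_boundaries by (force simp: boundaries_def)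
    then show "x \<in> hom_class d ` H k"
      by (metis hom_class_eq_iff image_eqI)
  qed
  moreover have "hom_class d ` H k \<subseteq> hom_class d ` cycles k"
    using H_subset_cycles by blast
  ultimately show "hom_class d ` H k = homology_deg C d k"
    unfolding homology_deg_def cycles_def by blast
qed

lemma cycle_in_A_is_boundary:
  assumes "a \<in> A k" "d a = 0"
  shows "a \<in> d ` A (k + 1)"
proof -
  have "a \<in> cycles k"
    using assms A_subset_C by (auto simp: cycles_def)
  then obtain h b where "a = h + b" "h \<in> H k" "b \<in> boundaries k"
    using H_plus_boundaries by blast
  moreover from calculation have "h \<in> A k"
    using subspace_diff[OF subspace_A assms(1)] boundaries_subset_A by (metis add_diff_cancel_right' subsetD)
  ultimately have "a \<in> boundaries k"
    using A_Int_H[of k] by (metis IntI add_0 singletonD)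
  then obtain y where "y \<in> C (k + 1)" "a = d y"
    by (auto simp: boundaries_def)
  moreover obtain a' h' where "y = a' + h'" "a' \<in> A (k + 1)" "h' \<in> H (k + 1)"
    using A_plus_H calculation(1) by blast
  ultimately show ?thesis
    using d_H by (auto simp: d.add)
qed

end

theorem proposition3p12:
  fixes scale :: "'k::field \<Rightarrow> 'v::ab_group_add \<Rightarrow> 'v"
    and C :: "int \<Rightarrow> 'v set" and d :: "'v \<Rightarrow> 'v" and L :: "'v \<Rightarrow> ereal"
  assumes "vector_space scale"
    and "ascending_chain_complex scale C d L"
    and "\<forall>k. best_approx scale (C k) L"
  shows "\<exists>A H. subcomplex scale C d A \<and> subcomplex scale C d H \<and>
    (\<forall>k. {a + h | a h. a \<in> A k \<and> h \<in> H k} = C k \<and> A k \<inter> H k = {0} \<and>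
         (\<forall>a\<in>A k. \<forall>h\<in>H k. L (a + h) = max (L a) (L h))) \<and>
    (\<forall>k. \<forall>h\<in>H k. d h = 0) \<and>
    (\<forall>k. bij_betw (hom_class d) (H k) (homology_deg C d k) \<and>
         (\<forall>h\<in>H k. spectral_invariant d L (hom_class d h) = L h)) \<and>
    (\<forall>k. \<forall>a\<in>A k. d a = 0 \<longrightarrow> a \<in> d ` A (k + 1))"
proof -
  interpret best_approx_chain_complex scale C d L
    using assms by (simp add: best_approx_chain_complex_def best_approx_chain_complex_axioms_def
        filtered_chain_complex_def filtered_chain_complex_axioms_def)
  obtain A H where "harmonic_splitting scale C d L A H"
    using exists_harmonic_splitting by blast
  then interpret harmonic_splitting scale C d L A H .
  show ?thesis
    using subcomplex_A subcomplex_H A_plus_H A_Int_H orthogonal_A_H d_H bij_betw_hom_class_H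
      spectral_invariant_H cycle_in_A_is_boundary
    by (intro exI[of _ A] exI[of _ H]) (auto simp: orthogonal_wrt_def)
qed

end
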